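(* Let $G$ be a finitely generated group, equipped with a word metric with respect to a finite symmetric generating set, acting by isometries on a metric space $X$ with $\operatorname{asdim}_{AN}(X)<\infty$. Fix $x_0\in X$ and for $R>0$ let $W_R(x_0)=\{\gamma\in G: d(\gamma\cdot x_0,x_0)\le R\}$ (with the metric restricted from $G$). If there are constants $m,b,c>0$ such that for every $R>0$ the function $r\mapsto m r+bR+c$ is a $k$-dimensional control function of $W_R(x_0)$, then $$\operatorname{asdim}_{AN}(G)\le k+\operatorname{asdim}_{AN}(X).$$
   Context: A $k$-dimensional control function of a metric space $Z$ is a function $D\colon\mathbb R_+\to\mathbb R_+$ such that for every $r>0$ there are families $\mathcal U_1,\dots,\mathcal U_{k+1}$ of subsets of $Z$ covering $Z$, each $r$-disjoint (points in different members of the same family at distance $\ge r$), with members of diameter $\le D(r)$. $\operatorname{asdim}_{AN}(Z)\le n$ iff $Z$ has an $n$-dimensional control function of the form $r\mapsto cr+b$ with $b,c\ge0$; $\operatorname{asdim}_{AN}(Z)$ is the least such $n$. *)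

theory Defs
  imports "HOL-Analysis.Analysis" "HOL-Algebra.Group" "HOL-Algebra.Generated_Groups"
    "HOL-Library.Extended_Nat"
begin

definition r_disjoint :: "('a \<Rightarrow> 'a \<Rightarrow> real) \<Rightarrow> real \<Rightarrow> 'a set set \<Rightarrow> bool" where
  "r_disjoint d r U \<longleftrightarrow>
     (\<forall>A\<in>U. \<forall>B\<in>U. A \<noteq> B \<longrightarrow> (\<forall>x\<in>A. \<forall>y\<in>B. r \<le> d x y))"

definition control_function ::
  "'a set \<Rightarrow> ('a \<Rightarrow> 'a \<Rightarrow> real) \<Rightarrow> nat \<Rightarrow> (real \<Rightarrow> real) \<Rightarrow> bool" where
  "control_function Z d k D \<longleftrightarrow>
     (\<forall>r>0. D r \<ge> 0) \<and>
     (\<forall>r>0. \<exists>U :: nat \<Rightarrow> 'a set set.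
        (\<forall>i\<le>k. (\<forall>A\<in>U i. A \<subseteq> Z) \<and> r_disjoint d r (U i)
               \<and> (\<forall>A\<in>U i. \<forall>x\<in>A. \<forall>y\<in>A. d x y \<le> D r))
        \<and> Z \<subseteq> (\<Union>i\<le>k. \<Union>(U i)))"

definition asdim_AN_le :: "'a set \<Rightarrow> ('a \<Rightarrow> 'a \<Rightarrow> real) \<Rightarrow> nat \<Rightarrow> bool" where
  "asdim_AN_le Z d n \<longleftrightarrow>
     (\<exists>c b. c \<ge> 0 \<and> b \<ge> 0 \<and> control_function Z d n (\<lambda>r. c * r + b))"

text \<open>Assouad-Nagata dimension as an extended natural (\<infinity> if no n works).\<close>
definition asdim_AN :: "'a set \<Rightarrow> ('a \<Rightarrow> 'a \<Rightarrow> real) \<Rightarrow> enat" where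
  "asdim_AN Z d = Inf {enat n | n. asdim_AN_le Z d n}"

definition word_length :: "('g, 'b) monoid_scheme \<Rightarrow> 'g set \<Rightarrow> 'g \<Rightarrow> nat" where
  "word_length G S g = (LEAST n. \<exists>ws. length ws = n \<and> set ws \<subseteq> S \<and>
                                   foldr (\<otimes>\<^bsub>G\<^esub>) ws \<one>\<^bsub>G\<^esub> = g)"

definition word_dist :: "('g, 'b) monoid_scheme \<Rightarrow> 'g set \<Rightarrow> 'g \<Rightarrow> 'g \<Rightarrow> real" where
  "word_dist G S g h = real (word_length G S (inv\<^bsub>G\<^esub> g \<otimes>\<^bsub>G\<^esub> h))"

end

theory Submission
  imports Defs
begin

text \<open>
  The orbit map \<open>\<gamma> \<mapsto> \<gamma> \<cdot> x\<^sub>0\<close> is Lipschitz for the word metric, and by left invariance every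
  subset of \<open>G\<close> whose orbit has diameter at most \<open>R\<close> is a translate of a subset of \<open>W\<^sub>R(x\<^sub>0)\<close>,
  so it has \<open>k\<close>-dimensional covers with control \<open>m r + b R + c\<close>. Fix \<open>r\<close> and a cover
  \<open>U\<^sub>0, \<dots>, U\<^sub>n\<close> of \<open>X\<close> at scale \<open>3 s\<close> with \<open>s\<close> proportional to \<open>r\<close>. The preimages of the
  \<open>s\<close>-neighbourhoods of the members of one \<open>U\<^sub>i\<close> are \<open>r\<close>-disjoint and have orbits of diameter
  linear in \<open>r\<close>. Induction on \<open>i\<close> covers the preimage of \<open>U\<^sub>0 \<union> \<dots> \<union> U\<^sub>i\<close> by \<open>k + i + 1\<close>
  families: the covers of the new pieces are saturated by the cover of the previous stage and glued
  to it along the level sets of \<open>1 - dist(\<gamma> x\<^sub>0, \<Union>U\<^sub>i) / s\<close>. All meshes stay linear in \<open>r\<close>,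
  whence \<open>asdim\<^sub>A\<^sub>N G \<le> k + n\<close>.
\<close>

section \<open>Covers with bounded mesh\<close>

definition uniformly_bounded :: "('a \<Rightarrow> 'a \<Rightarrow> real) \<Rightarrow> real \<Rightarrow> 'a set set \<Rightarrow> bool" where
  "uniformly_bounded d M \<U> \<longleftrightarrow> (\<forall>A\<in>\<U>. \<forall>x\<in>A. \<forall>y\<in>A. d x y \<le> M)"

definition control_cover ::
  "('a \<Rightarrow> 'a \<Rightarrow> real) \<Rightarrow> 'a set \<Rightarrow> real \<Rightarrow> real \<Rightarrow> nat \<Rightarrow> (nat \<Rightarrow> 'a set set) \<Rightarrow> bool" where
  "control_cover d Z r M k U \<longleftrightarrow>
     (\<forall>i\<le>k. (\<forall>A\<in>U i. A \<subseteq> Z) \<and> r_disjoint d r (U i) \<and> uniformly_bounded d M (U i))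
     \<and> Z \<subseteq> (\<Union>i\<le>k. \<Union>(U i))"

lemma control_function_iff:
  "control_function Z d k D \<longleftrightarrow> (\<forall>r>0. 0 \<le> D r) \<and> (\<forall>r>0. \<exists>U. control_cover d Z r (D r) k U)"
  by (simp add: control_function_def control_cover_def uniformly_bounded_def)

lemma r_disjointI:
  "(\<And>A B x y. A \<in> \<U> \<Longrightarrow> B \<in> \<U> \<Longrightarrow> A \<noteq> B \<Longrightarrow> x \<in> A \<Longrightarrow> y \<in> B \<Longrightarrow> r \<le> d x y)
   \<Longrightarrow> r_disjoint d r \<U>"
  unfolding r_disjoint_def by blast

lemma r_disjointD:
  "r_disjoint d r \<U> \<Longrightarrow> A \<in> \<U> \<Longrightarrow> B \<in> \<U> \<Longrightarrow> A \<noteq> B \<Longrightarrow> x \<in> A \<Longrightarrow> y \<in> B \<Longrightarrow> r \<le> d x y"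
  unfolding r_disjoint_def by blast

lemma r_disjoint_restrict: "r_disjoint d r \<U> \<Longrightarrow> r_disjoint d r ((\<lambda>A. A \<inter> Y) ` \<U>)"
  unfolding r_disjoint_def by blast

lemma r_disjoint_Un:
  assumes "r_disjoint d r \<P>" and "r_disjoint d r \<Q>"
    and separated: "\<And>x y. x \<in> \<Union>\<P> \<Longrightarrow> y \<in> \<Union>\<Q> \<Longrightarrow> r \<le> d x y \<and> r \<le> d y x"
  shows "r_disjoint d r (\<P> \<union> \<Q>)"
proof (rule r_disjointI)
  fix A B x y assume "A \<in> \<P> \<union> \<Q>" "B \<in> \<P> \<union> \<Q>" "A \<noteq> B" "x \<in> A" "y \<in> B"
  then consider "A \<in> \<P>" "B \<in> \<P>" | "A \<in> \<Q>" "B \<in> \<Q>" | "x \<in> \<Union>\<P>" "y \<in> \<Union>\<Q>"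
    | "y \<in> \<Union>\<P>" "x \<in> \<Union>\<Q>"
    by blast
  then show "r \<le> d x y"
  proof cases
    case 1
    then show ?thesis using r_disjointD[OF assms(1)] \<open>A \<noteq> B\<close> \<open>x \<in> A\<close> \<open>y \<in> B\<close> by blast
  next
    case 2
    then show ?thesis using r_disjointD[OF assms(2)] \<open>A \<noteq> B\<close> \<open>x \<in> A\<close> \<open>y \<in> B\<close> by blast
  qed (use separated in blast)+
qed

lemma uniformly_boundedI:
  "(\<And>A x y. A \<in> \<U> \<Longrightarrow> x \<in> A \<Longrightarrow> y \<in> A \<Longrightarrow> d x y \<le> M) \<Longrightarrow> uniformly_bounded d M \<U>"
  unfolding uniformly_bounded_def by blast

lemma uniformly_boundedD:
  "uniformly_bounded d M \<U> \<Longrightarrow> A \<in> \<U> \<Longrightarrow> x \<in> A \<Longrightarrow> y \<in> A \<Longrightarrow> d x y \<le> M"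
  unfolding uniformly_bounded_def by blast

lemma uniformly_bounded_mono: "uniformly_bounded d M \<U> \<Longrightarrow> M \<le> M' \<Longrightarrow> uniformly_bounded d M' \<U>"
  unfolding uniformly_bounded_def by force

lemma uniformly_bounded_restrict: "uniformly_bounded d M \<U> \<Longrightarrow> uniformly_bounded d M ((\<lambda>A. A \<inter> Y) ` \<U>)"
  unfolding uniformly_bounded_def by blast

lemma uniformly_bounded_Un:
  "uniformly_bounded d M \<P> \<Longrightarrow> uniformly_bounded d M \<Q> \<Longrightarrow> uniformly_bounded d M (\<P> \<union> \<Q>)"
  unfolding uniformly_bounded_def by blast

lemma control_coverI:
  assumes "\<And>i A. i \<le> k \<Longrightarrow> A \<in> U i \<Longrightarrow> A \<subseteq> Z"
    and "\<And>i. i \<le> k \<Longrightarrow> r_disjoint d r (U i)"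
    and "\<And>i. i \<le> k \<Longrightarrow> uniformly_bounded d M (U i)"
    and "\<And>x. x \<in> Z \<Longrightarrow> \<exists>i\<le>k. \<exists>A\<in>U i. x \<in> A"
  shows "control_cover d Z r M k U"
proof -
  have "Z \<subseteq> (\<Union>i\<le>k. \<Union>(U i))" using assms(4) by blast
  with assms(1-3) show ?thesis unfolding control_cover_def by auto
qed

lemma
  assumes "control_cover d Z r M k U" and "i \<le> k"
  shows control_cover_member: "A \<in> U i \<Longrightarrow> A \<subseteq> Z"
    and control_cover_disjoint: "r_disjoint d r (U i)"
    and control_cover_bounded: "uniformly_bounded d M (U i)"
  using assms unfolding control_cover_def by blast+

lemma control_cover_covers:
  assumes "control_cover d Z r M k U" and "x \<in> Z"
  obtains i A where "i \<le> k" "A \<in> U i" "x \<in> A"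
  using assms unfolding control_cover_def by blast

lemma control_cover_mono:
  assumes "control_cover d Z r M k U" and "M \<le> M'"
  shows "control_cover d Z r M' k U"
  using assms(1) uniformly_bounded_mono[OF _ assms(2)] unfolding control_cover_def by blast

lemma control_cover_raise_dim:
  assumes cover: "control_cover d Z r M k U" and "k \<le> k'"
  shows "control_cover d Z r M k' (\<lambda>i. if i \<le> k then U i else {})"
proof (rule control_coverI)
  fix x assume "x \<in> Z"
  with cover obtain i A where "i \<le> k" "A \<in> U i" "x \<in> A" by (rule control_cover_covers)
  with assms(2) show "\<exists>i\<le>k'. \<exists>A\<in>(if i \<le> k then U i else {}). x \<in> A" by force
next
  fix i A assume "A \<in> (if i \<le> k then U i else {})"
  then show "A \<subseteq> Z" using control_cover_member[OF cover] by (auto split: if_splits)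
next
  fix i
  show "r_disjoint d r (if i \<le> k then U i else {})"
    using control_cover_disjoint[OF cover] by (simp add: r_disjoint_def)
  show "uniformly_bounded d M (if i \<le> k then U i else {})"
    using control_cover_bounded[OF cover] by (simp add: uniformly_bounded_def)
qed

lemma control_cover_restrict:
  assumes cover: "control_cover d Z r M k U" and "Y \<subseteq> Z"
  shows "control_cover d Y r M k (\<lambda>i. (\<lambda>A. A \<inter> Y) ` U i)"
proof (rule control_coverI)
  fix x assume "x \<in> Y"
  obtain i A where "i \<le> k" "A \<in> U i" "x \<in> A"
    using cover subsetD[OF assms(2) \<open>x \<in> Y\<close>] by (rule control_cover_covers)
  with \<open>x \<in> Y\<close> show "\<exists>i\<le>k. \<exists>A\<in>(\<lambda>A. A \<inter> Y) ` U i. x \<in> A" by blast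
next
  fix i A assume "A \<in> (\<lambda>A. A \<inter> Y) ` U i"
  then show "A \<subseteq> Y" by blast
next
  fix i assume "i \<le> k"
  show "r_disjoint d r ((\<lambda>A. A \<inter> Y) ` U i)"
    by (rule r_disjoint_restrict[OF control_cover_disjoint[OF cover \<open>i \<le> k\<close>]])
  show "uniformly_bounded d M ((\<lambda>A. A \<inter> Y) ` U i)"
    by (rule uniformly_bounded_restrict[OF control_cover_bounded[OF cover \<open>i \<le> k\<close>]])
qed

lemma control_cover_image:
  assumes cover: "control_cover d Z r M k U"
    and isometric: "\<And>x y. x \<in> Z \<Longrightarrow> y \<in> Z \<Longrightarrow> d' (\<phi> x) (\<phi> y) = d x y"
  shows "control_cover d' (\<phi> ` Z) r M k (\<lambda>i. (`) \<phi> ` U i)"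
proof (rule control_coverI)
  fix i A assume "i \<le> k" "A \<in> (`) \<phi> ` U i"
  then show "A \<subseteq> \<phi> ` Z" using control_cover_member[OF cover] by blast
next
  fix i assume i: "i \<le> k"
  note member = control_cover_member[OF cover i]
  show "r_disjoint d' r ((`) \<phi> ` U i)"
  proof (rule r_disjointI, elim imageE)
    fix A B x y A' B' assume "A \<noteq> B" "x \<in> A" "y \<in> B" "A = \<phi> ` A'" "A' \<in> U i" "B = \<phi> ` B'" "B' \<in> U i"
    then obtain x' y' where "x' \<in> A'" "y' \<in> B'" "x = \<phi> x'" "y = \<phi> y'" "A' \<noteq> B'" by blast
    moreover have "r \<le> d x' y'"
      using r_disjointD[OF control_cover_disjoint[OF cover i] \<open>A' \<in> U i\<close> \<open>B' \<in> U i\<close>] calculation by blast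
    moreover have "x' \<in> Z" "y' \<in> Z" using member \<open>A' \<in> U i\<close> \<open>B' \<in> U i\<close> calculation by blast+
    ultimately show "r \<le> d' x y" using isometric by simp
  qed
  show "uniformly_bounded d' M ((`) \<phi> ` U i)"
  proof (rule uniformly_boundedI, elim imageE)
    fix A x y A' assume "x \<in> A" "y \<in> A" "A = \<phi> ` A'" "A' \<in> U i"
    then obtain x' y' where "x' \<in> A'" "y' \<in> A'" "x = \<phi> x'" "y = \<phi> y'" by blast
    moreover have "d x' y' \<le> M"
      using uniformly_boundedD[OF control_cover_bounded[OF cover i] \<open>A' \<in> U i\<close>] calculation by blast
    moreover have "x' \<in> Z" "y' \<in> Z" using member \<open>A' \<in> U i\<close> calculation by blast+
    ultimately show "d' x y \<le> M" using isometric by simp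
  qed
next
  fix x assume "x \<in> \<phi> ` Z"
  then obtain z where "z \<in> Z" "x = \<phi> z" by blast
  obtain i A where "i \<le> k" "A \<in> U i" "z \<in> A"
    using cover \<open>z \<in> Z\<close> by (rule control_cover_covers)
  with \<open>x = \<phi> z\<close> show "\<exists>i\<le>k. \<exists>A\<in>(`) \<phi> ` U i. x \<in> A" by blast
qed

lemma control_function_subset:
  assumes "control_function Z d k D" and "Y \<subseteq> Z"
  shows "control_function Y d k D"
  unfolding control_function_iff
proof (intro conjI allI impI)
  fix r :: real assume "0 < r"
  then obtain U where "control_cover d Z r (D r) k U" using assms(1) unfolding control_function_iff by blast
  then have "control_cover d Y r (D r) k (\<lambda>i. (\<lambda>A. A \<inter> Y) ` U i)"
    using assms(2) by (rule control_cover_restrict)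
  then show "\<exists>U. control_cover d Y r (D r) k U" by blast
qed (use assms(1) in \<open>simp add: control_function_iff\<close>)

lemma control_function_image:
  assumes "control_function Z d k D"
    and isometric: "\<And>x y. x \<in> Z \<Longrightarrow> y \<in> Z \<Longrightarrow> d' (\<phi> x) (\<phi> y) = d x y"
  shows "control_function (\<phi> ` Z) d' k D"
  unfolding control_function_iff
proof (intro conjI allI impI)
  fix r :: real assume "0 < r"
  then obtain U where "control_cover d Z r (D r) k U" using assms(1) unfolding control_function_iff by blast
  then have "control_cover d' (\<phi> ` Z) r (D r) k (\<lambda>i. (`) \<phi> ` U i)"
    using isometric by (rule control_cover_image)
  then show "\<exists>U. control_cover d' (\<phi> ` Z) r (D r) k U" by blast
qed (use assms(1) in \<open>simp add: control_function_iff\<close>)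

lemma control_cover_Union:
  assumes disjoint: "r_disjoint d r \<Q>"
    and covers: "\<And>Q. Q \<in> \<Q> \<Longrightarrow> control_cover d Q r M k (F Q)"
  shows "control_cover d (\<Union>\<Q>) r M k (\<lambda>i. \<Union>Q\<in>\<Q>. F Q i)"
proof (rule control_coverI)
  fix i assume i: "i \<le> k"
  show "r_disjoint d r (\<Union>Q\<in>\<Q>. F Q i)"
  proof (rule r_disjointI)
    fix A B x y assume "A \<in> (\<Union>Q\<in>\<Q>. F Q i)" "B \<in> (\<Union>Q\<in>\<Q>. F Q i)" "A \<noteq> B" "x \<in> A" "y \<in> B"
    then obtain Q1 Q2 where Q: "Q1 \<in> \<Q>" "A \<in> F Q1 i" "Q2 \<in> \<Q>" "B \<in> F Q2 i" by blast
    show "r \<le> d x y"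
    proof (cases "Q1 = Q2")
      case True
      then show ?thesis
        using r_disjointD[OF control_cover_disjoint[OF covers i]] Q \<open>A \<noteq> B\<close> \<open>x \<in> A\<close> \<open>y \<in> B\<close> by blast
    next
      case False
      have "x \<in> Q1" "y \<in> Q2"
        using control_cover_member[OF covers[OF Q(1)] i Q(2)] control_cover_member[OF covers[OF Q(3)] i Q(4)]
          \<open>x \<in> A\<close> \<open>y \<in> B\<close> by blast+
      then show ?thesis using r_disjointD[OF disjoint Q(1) Q(3) False] by blast
    qed
  qed
  show "uniformly_bounded d M (\<Union>Q\<in>\<Q>. F Q i)"
    using control_cover_bounded[OF covers i] by (auto simp: uniformly_bounded_def)
next
  fix x assume "x \<in> \<Union>\<Q>"
  then obtain Q where "Q \<in> \<Q>" "x \<in> Q" by blast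
  obtain i A where "i \<le> k" "A \<in> F Q i" "x \<in> A"
    using covers[OF \<open>Q \<in> \<Q>\<close>] \<open>x \<in> Q\<close> by (rule control_cover_covers)
  with \<open>Q \<in> \<Q>\<close> show "\<exists>i\<le>k. \<exists>A\<in>(\<Union>Q\<in>\<Q>. F Q i). x \<in> A" by blast
next
  fix i A assume "i \<le> k" "A \<in> (\<Union>Q\<in>\<Q>. F Q i)"
  then obtain Q where "Q \<in> \<Q>" "A \<in> F Q i" by blast
  then show "A \<subseteq> \<Union>\<Q>" using control_cover_member[OF covers \<open>i \<le> k\<close>] by blast
qed

section \<open>Saturation and gluing\<close>

locale pseudometric =
  fixes C :: "'a set" and d :: "'a \<Rightarrow> 'a \<Rightarrow> real"
  assumes zero: "x \<in> C \<Longrightarrow> d x x = 0"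
    and commute: "x \<in> C \<Longrightarrow> y \<in> C \<Longrightarrow> d x y = d y x"
    and triangle: "x \<in> C \<Longrightarrow> y \<in> C \<Longrightarrow> z \<in> C \<Longrightarrow> d x z \<le> d x y + d y z"

definition touches :: "('a \<Rightarrow> 'a \<Rightarrow> real) \<Rightarrow> real \<Rightarrow> 'a set \<Rightarrow> 'a set \<Rightarrow> bool" where
  "touches d r A B \<longleftrightarrow> (\<exists>x\<in>A. \<exists>y\<in>B. d x y < r)"

definition saturation :: "('a \<Rightarrow> 'a \<Rightarrow> real) \<Rightarrow> real \<Rightarrow> 'a set set \<Rightarrow> 'a set set \<Rightarrow> 'a set set" where
  "saturation d r \<E> \<A> =
     (\<lambda>E. E \<union> \<Union>{A\<in>\<A>. touches d r A E}) ` \<E> \<union> {A\<in>\<A>. \<forall>E\<in>\<E>. \<not> touches d r A E}"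

lemma Union_saturation: "\<Union>(saturation d r \<E> \<A>) = \<Union>\<E> \<union> \<Union>\<A>"
  unfolding saturation_def by blast

locale saturation_data = pseudometric +
  fixes \<E> \<A> :: "'a set set" and r \<phi> MA :: real
  assumes E_sub: "\<Union>\<E> \<subseteq> C" and A_sub: "\<Union>\<A> \<subseteq> C"
    and E_disjoint: "r_disjoint d (2 * r + MA) \<E>" and E_bounded: "uniformly_bounded d \<phi> \<E>"
    and A_disjoint: "r_disjoint d r \<A>" and A_bounded: "uniformly_bounded d MA \<A>"
    and nonneg: "0 \<le> \<phi>" "0 \<le> MA" "0 < r"
begin

abbreviation absorb :: "'a set \<Rightarrow> 'a set" where
  "absorb E \<equiv> E \<union> \<Union>{A\<in>\<A>. touches d r A E}"

lemma touches_unique: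
  assumes "A \<in> \<A>" "E1 \<in> \<E>" "E2 \<in> \<E>" "touches d r A E1" "touches d r A E2"
  shows "E1 = E2"
proof (rule ccontr)
  assume "E1 \<noteq> E2"
  obtain x1 y1 where 1: "x1 \<in> A" "y1 \<in> E1" "d x1 y1 < r" using assms(4) unfolding touches_def by blast
  obtain x2 y2 where 2: "x2 \<in> A" "y2 \<in> E2" "d x2 y2 < r" using assms(5) unfolding touches_def by blast
  have C: "x1 \<in> C" "x2 \<in> C" "y1 \<in> C" "y2 \<in> C"
    using assms(1-3) 1 2 E_sub A_sub by blast+
  have "d x1 x2 \<le> MA" by (rule uniformly_boundedD[OF A_bounded assms(1) 1(1) 2(1)])
  moreover have "d y1 y2 \<le> d y1 x1 + d x1 y2" using C by (intro triangle)
  moreover have "d x1 y2 \<le> d x1 x2 + d x2 y2" using C by (intro triangle)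
  moreover have "d y1 x1 = d x1 y1" using C by (intro commute)
  moreover have "2 * r + MA \<le> d y1 y2"
    by (rule r_disjointD[OF E_disjoint assms(2,3) \<open>E1 \<noteq> E2\<close> 1(2) 2(2)])
  ultimately show False using 1(3) 2(3) by linarith
qed

lemma absorb_near:
  assumes "E \<in> \<E>" "z \<in> absorb E"
  obtains w where "w \<in> E" "d z w \<le> r + MA"
proof (cases "z \<in> E")
  case True
  then have "z \<in> C" using E_sub assms(1) by blast
  then have "d z z \<le> r + MA" using zero nonneg by simp
  with True show thesis by (rule that)
next
  case False
  then obtain A x y where A: "A \<in> \<A>" "z \<in> A" "x \<in> A" "y \<in> E" "d x y < r"
    using assms(2) unfolding touches_def by blast
  have C: "z \<in> C" "x \<in> C" "y \<in> C" using assms(1) E_sub A_sub A by blast+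
  have "d z x \<le> MA" by (rule uniformly_boundedD[OF A_bounded A(1,2,3)])
  moreover have "d z y \<le> d z x + d x y" using C by (intro triangle)
  ultimately have "d z y \<le> r + MA" using A(5) by linarith
  with A(4) show thesis by (rule that)
qed

lemma saturation_bounded: "uniformly_bounded d (\<phi> + 2 * MA + 2 * r) (saturation d r \<E> \<A>)"
proof (rule uniformly_boundedI)
  fix B x y assume "B \<in> saturation d r \<E> \<A>" "x \<in> B" "y \<in> B"
  then consider E where "E \<in> \<E>" "B = absorb E" | "B \<in> \<A>"
    unfolding saturation_def by blast
  then show "d x y \<le> \<phi> + 2 * MA + 2 * r"
  proof cases
    case 1
    obtain v where v: "v \<in> E" "d x v \<le> r + MA" using absorb_near 1 \<open>x \<in> B\<close> by blast
    obtain w where w: "w \<in> E" "d y w \<le> r + MA" using absorb_near 1 \<open>y \<in> B\<close> by blast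
    have C: "x \<in> C" "y \<in> C" "v \<in> C" "w \<in> C"
      using 1 \<open>x \<in> B\<close> \<open>y \<in> B\<close> v w E_sub A_sub by blast+
    have "d v w \<le> \<phi>" by (rule uniformly_boundedD[OF E_bounded 1(1) v(1) w(1)])
    moreover have "d x y \<le> d x v + d v y" using C by (intro triangle)
    moreover have "d v y \<le> d v w + d w y" using C by (intro triangle)
    moreover have "d w y = d y w" using C by (intro commute)
    ultimately show ?thesis using v(2) w(2) by linarith
  next
    case 2
    then have "d x y \<le> MA" using uniformly_boundedD[OF A_bounded] \<open>x \<in> B\<close> \<open>y \<in> B\<close> by blast
    then show ?thesis using nonneg by linarith
  qed
qed

lemma saturation_memberE:
  assumes "B \<in> saturation d r \<E> \<A>" "z \<in> B"
  obtains E where "E \<in> \<E>" "z \<in> E" "B = absorb E"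
    | A where "A \<in> \<A>" "z \<in> A" "\<And>E. E \<in> \<E> \<Longrightarrow> touches d r A E \<Longrightarrow> B = absorb E"
      "(\<forall>E\<in>\<E>. \<not> touches d r A E) \<Longrightarrow> B = A"
proof -
  consider (absorbing) E where "E \<in> \<E>" "B = absorb E"
    | (kept) "B \<in> \<A>" "\<forall>E\<in>\<E>. \<not> touches d r B E"
    using assms(1) unfolding saturation_def by blast
  then show thesis
  proof cases
    case absorbing
    then consider "z \<in> E" | A where "A \<in> \<A>" "z \<in> A" "touches d r A E" using assms(2) by blast
    then show thesis
    proof cases
      case 1
      then show thesis using absorbing that(1) by blast
    next
      case (2 A)
      show thesis
      proof (rule that(2)[OF 2(1,2)])
        show "B = absorb E'" if "E' \<in> \<E>" "touches d r A E'" for E'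
          using touches_unique[OF 2(1) absorbing(1) that(1) 2(3) that(2)] absorbing(2) by simp
        show "B = A" if "\<forall>E\<in>\<E>. \<not> touches d r A E" using that 2 absorbing by blast
      qed
    qed
  next
    case kept
    show thesis
    proof (rule that(2)[OF kept(1) assms(2)])
      show "B = absorb E" if "E \<in> \<E>" "touches d r B E" for E using that kept(2) by blast
    qed simp
  qed
qed

lemma saturation_disjoint: "r_disjoint d r (saturation d r \<E> \<A>)"
proof (rule r_disjointI, rule ccontr)
  fix B1 B2 x y assume B: "B1 \<in> saturation d r \<E> \<A>" "B2 \<in> saturation d r \<E> \<A>" "B1 \<noteq> B2"
    and "x \<in> B1" "y \<in> B2" and "\<not> r \<le> d x y"
  have "\<Union>(saturation d r \<E> \<A>) \<subseteq> C" using E_sub A_sub by (simp add: Union_saturation)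
  then have "x \<in> C" "y \<in> C" using B \<open>x \<in> B1\<close> \<open>y \<in> B2\<close> by blast+
  then have "d y x = d x y" by (intro commute)
  with \<open>\<not> r \<le> d x y\<close> have xy: "d x y < r" "d y x < r" by simp_all
  from B(1) \<open>x \<in> B1\<close> show False
  proof (cases rule: saturation_memberE)
    case (1 E1)
    note E1 = this
    from B(2) \<open>y \<in> B2\<close> show False
    proof (cases rule: saturation_memberE)
      case (1 E2)
      have "E1 = E2"
      proof (rule ccontr)
        assume "E1 \<noteq> E2"
        then have "2 * r + MA \<le> d x y" using r_disjointD[OF E_disjoint E1(1) 1(1)] E1(2) 1(2) by blast
        then show False using xy nonneg by linarith
      qed
      then show False using E1(3) 1(3) B(3) by simp
    next
      case (2 A2)
      have "touches d r A2 E1" unfolding touches_def using 2(2) E1(2) xy(2) by blast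
      then have "B2 = absorb E1" by (rule 2(3)[OF E1(1)])
      then show False using E1(3) B(3) by simp
    qed
  next
    case (2 A1)
    note A1 = this
    from B(2) \<open>y \<in> B2\<close> show False
    proof (cases rule: saturation_memberE)
      case (1 E2)
      have "touches d r A1 E2" unfolding touches_def using A1(2) 1(2) xy(1) by blast
      then have "B1 = absorb E2" by (rule A1(3)[OF 1(1)])
      then show False using 1(3) B(3) by simp
    next
      case (2 A2)
      have "A1 = A2"
      proof (rule ccontr)
        assume "A1 \<noteq> A2"
        then have "r \<le> d x y" using r_disjointD[OF A_disjoint A1(1) 2(1)] A1(2) 2(2) by blast
        then show False using xy by linarith
      qed
      show False
      proof (cases "\<exists>E\<in>\<E>. touches d r A1 E")
        case True
        then obtain E where "E \<in> \<E>" "touches d r A1 E" by blast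
        then have "B1 = absorb E" "B2 = absorb E"
          using A1(3) 2(3) \<open>A1 = A2\<close> by blast+
        then show False using B(3) by simp
      next
        case False
        then have "B1 = A1" "B2 = A1" using A1(4) 2(4) \<open>A1 = A2\<close> by simp_all
        then show False using B(3) by simp
      qed
    qed
  qed
qed

end


lemma control_cover_shift:
  assumes cover: "control_cover d Z r M k U"
  shows "control_cover d Z r M (Suc k) (\<lambda>i. if i = 0 then {} else U (i - 1))"
proof (rule control_coverI)
  fix x assume "x \<in> Z"
  with cover obtain i A where "i \<le> k" "A \<in> U i" "x \<in> A" by (rule control_cover_covers)
  then show "\<exists>i\<le>Suc k. \<exists>A\<in>(if i = 0 then {} else U (i - 1)). x \<in> A"
    by (intro exI[of _ "Suc i"]) auto
next
  fix i A assume "i \<le> Suc k" "A \<in> (if i = 0 then {} else U (i - 1))"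
  then show "A \<subseteq> Z" using control_cover_member[OF cover, of "i - 1"] by (auto split: if_splits)
next
  fix i assume "i \<le> Suc k"
  then show "r_disjoint d r (if i = 0 then {} else U (i - 1))"
    and "uniformly_bounded d M (if i = 0 then {} else U (i - 1))"
    using control_cover_disjoint[OF cover, of "i - 1"] control_cover_bounded[OF cover, of "i - 1"]
    by (auto simp: r_disjoint_def uniformly_bounded_def)
qed

locale gluing =
  fixes d :: "'a \<Rightarrow> 'a \<Rightarrow> real" and Z A B :: "'a set" and r M :: real and dd :: nat
    and \<A> \<B> :: "nat \<Rightarrow> 'a set set" and \<alpha> :: "'a \<Rightarrow> real"
  assumes A_sub: "A \<subseteq> Z" and B_sub: "B \<subseteq> Z"
    and cover_A: "control_cover d A r M dd \<A>" and cover_B: "control_cover d B r M dd \<B>"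
    and consistent: "\<And>j. j \<le> dd \<Longrightarrow> \<Union>(\<A> j) \<inter> {x. 0 < \<alpha> x} \<subseteq> \<Union>(\<B> j)"
    and low: "\<And>x. x \<in> Z \<Longrightarrow> \<alpha> x < 1 \<Longrightarrow> x \<in> A"
    and high: "\<And>x. x \<in> Z \<Longrightarrow> 0 < \<alpha> x \<Longrightarrow> x \<in> B"
    and separated: "\<And>x y. x \<in> Z \<Longrightarrow> y \<in> Z \<Longrightarrow> 1 / (real dd + 1) \<le> \<bar>\<alpha> x - \<alpha> y\<bar> \<Longrightarrow> r \<le> d x y"
begin

definition threshold :: "nat \<Rightarrow> real" where
  "threshold l = 1 - real l / (real dd + 1)"

text \<open>Consecutive thresholds differ by \<open>1 / (dd + 1)\<close>, so the parts cut from \<open>\<A> l\<close> and from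
  \<open>\<B> (l - 1)\<close> are \<open>r\<close>-apart by \<open>separated\<close>.\<close>
definition glued :: "nat \<Rightarrow> 'a set set" where
  "glued l = (\<lambda>X. X \<inter> {x. \<alpha> x \<le> threshold l}) ` (if l \<le> dd then \<A> l else {})
           \<union> (\<lambda>X. X \<inter> {x. threshold (l - 1) \<le> \<alpha> x}) ` (if l = 0 then {} else \<B> (l - 1))"

lemma glued_covers:
  assumes "x \<in> Z"
  shows "\<exists>l\<le>Suc dd. \<exists>X\<in>glued l. x \<in> X"
proof (cases "\<alpha> x < 1")
  case True
  obtain j X where j: "j \<le> dd" "X \<in> \<A> j" "x \<in> X"
    using cover_A low[OF assms True] by (rule control_cover_covers)
  show ?thesis
  proof (cases "\<alpha> x \<le> threshold j")
    case True
    have "X \<inter> {x. \<alpha> x \<le> threshold j} \<in> glued j"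
      unfolding glued_def using j(1,2) by (intro UnI1 imageI) simp
    moreover have "x \<in> X \<inter> {x. \<alpha> x \<le> threshold j}" using j(3) True by simp
    moreover have "j \<le> Suc dd" using j(1) by simp
    ultimately show ?thesis by (intro exI[where x = j] conjI bexI)
  next
    case False
    have "1 / (real dd + 1) \<le> threshold j"
      using j(1) by (simp add: threshold_def field_simps)
    moreover have "0 < 1 / (real dd + 1)" by simp
    ultimately have "0 < \<alpha> x" using False by linarith
    then obtain Y where Y: "Y \<in> \<B> j" "x \<in> Y" using consistent[OF j(1)] j(2,3) by blast
    have "Y \<inter> {x. threshold (Suc j - 1) \<le> \<alpha> x} \<in> glued (Suc j)"
      unfolding glued_def using Y(1) by (intro UnI2 imageI) simp
    moreover have "x \<in> Y \<inter> {x. threshold (Suc j - 1) \<le> \<alpha> x}" using Y(2) False by simp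
    moreover have "Suc j \<le> Suc dd" using j(1) by simp
    ultimately show ?thesis by (intro exI[where x = "Suc j"] conjI bexI)
  qed
next
  case False
  then have "0 < \<alpha> x" by linarith
  obtain j Y where j: "j \<le> dd" "Y \<in> \<B> j" "x \<in> Y"
    using cover_B high[OF assms \<open>0 < \<alpha> x\<close>] by (rule control_cover_covers)
  have "threshold j \<le> 1" unfolding threshold_def by simp
  have "Y \<inter> {x. threshold (Suc j - 1) \<le> \<alpha> x} \<in> glued (Suc j)"
    unfolding glued_def using j(2) by (intro UnI2 imageI) simp
  moreover have "x \<in> Y \<inter> {x. threshold (Suc j - 1) \<le> \<alpha> x}"
    using j(3) False \<open>threshold j \<le> 1\<close> by simp
  moreover have "Suc j \<le> Suc dd" using j(1) by simp
  ultimately show ?thesis by (intro exI[where x = "Suc j"] conjI bexI)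
qed

lemma glued_control_cover: "control_cover d Z r M (Suc dd) glued"
proof (rule control_coverI)
  have cover_A': "control_cover d A r M (Suc dd) (\<lambda>l. if l \<le> dd then \<A> l else {})"
    using control_cover_raise_dim[OF cover_A] by simp
  have cover_B': "control_cover d B r M (Suc dd) (\<lambda>l. if l = 0 then {} else \<B> (l - 1))"
    by (rule control_cover_shift[OF cover_B])
  fix l assume l: "l \<le> Suc dd"
  note A' = control_cover_member[OF cover_A' l] control_cover_disjoint[OF cover_A' l]
    control_cover_bounded[OF cover_A' l]
  note B' = control_cover_member[OF cover_B' l] control_cover_disjoint[OF cover_B' l]
    control_cover_bounded[OF cover_B' l]
  show "X \<subseteq> Z" if "X \<in> glued l" for X
    using that A'(1) B'(1) A_sub B_sub unfolding glued_def by blast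
  show "uniformly_bounded d M (glued l)"
    unfolding glued_def using A'(3) B'(3) by (intro uniformly_bounded_Un uniformly_bounded_restrict)
  show "r_disjoint d r (glued l)"
    unfolding glued_def
  proof (intro r_disjoint_Un r_disjoint_restrict A'(2) B'(2))
    fix x y
    assume x: "x \<in> \<Union>((\<lambda>X. X \<inter> {x. \<alpha> x \<le> threshold l}) ` (if l \<le> dd then \<A> l else {}))"
      and y: "y \<in> \<Union>((\<lambda>X. X \<inter> {x. threshold (l - 1) \<le> \<alpha> x}) ` (if l = 0 then {} else \<B> (l - 1)))"
    then have "x \<in> Z" "y \<in> Z" using A'(1) B'(1) A_sub B_sub by blast+
    have "l \<noteq> 0" using y by (auto split: if_splits)
    then have "threshold (l - 1) = threshold l + 1 / (real dd + 1)"
      by (simp add: threshold_def of_nat_diff field_simps)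
    then have "1 / (real dd + 1) \<le> \<bar>\<alpha> x - \<alpha> y\<bar>" "1 / (real dd + 1) \<le> \<bar>\<alpha> y - \<alpha> x\<bar>"
      using x y by auto
    then show "r \<le> d x y \<and> r \<le> d y x" using separated \<open>x \<in> Z\<close> \<open>y \<in> Z\<close> by blast
  qed
qed (rule glued_covers)

end

lemma (in pseudometric) control_cover_saturate:
  assumes "Q \<subseteq> C" "A \<subseteq> C"
    and cover_Q: "control_cover d Q (2 * r + MA) \<phi> k \<E>"
    and cover_A: "control_cover d A r MA k \<A>"
    and nonneg: "0 \<le> \<phi>" "0 \<le> MA" "0 < r"
  shows "control_cover d Q r (\<phi> + 2 * MA + 2 * r) k (\<lambda>j. saturation d r (\<E> j) ((\<lambda>X. X \<inter> Q) ` \<A> j))"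
proof (rule control_coverI)
  fix j assume j: "j \<le> k"
  interpret saturation_data C d "\<E> j" "(\<lambda>X. X \<inter> Q) ` \<A> j" r \<phi> MA
  proof
    show "\<Union>(\<E> j) \<subseteq> C" "\<Union>((\<lambda>X. X \<inter> Q) ` \<A> j) \<subseteq> C"
      using control_cover_member[OF cover_Q j] assms(1) by blast+
  qed (use control_cover_disjoint[OF cover_Q j] control_cover_bounded[OF cover_Q j]
        r_disjoint_restrict[OF control_cover_disjoint[OF cover_A j]]
        uniformly_bounded_restrict[OF control_cover_bounded[OF cover_A j]] nonneg in auto)
  show "r_disjoint d r (saturation d r (\<E> j) ((\<lambda>X. X \<inter> Q) ` \<A> j))"
    by (rule saturation_disjoint)
  show "uniformly_bounded d (\<phi> + 2 * MA + 2 * r) (saturation d r (\<E> j) ((\<lambda>X. X \<inter> Q) ` \<A> j))"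
    by (rule saturation_bounded)
  have "\<Union>(saturation d r (\<E> j) ((\<lambda>X. X \<inter> Q) ` \<A> j)) \<subseteq> Q"
    using control_cover_member[OF cover_Q j] by (auto simp: Union_saturation)
  then show "X \<subseteq> Q" if "X \<in> saturation d r (\<E> j) ((\<lambda>X. X \<inter> Q) ` \<A> j)" for X
    using that by blast
next
  fix x assume "x \<in> Q"
  then obtain j E where "j \<le> k" "E \<in> \<E> j" "x \<in> E" using cover_Q by (blast elim: control_cover_covers)
  moreover have "x \<in> \<Union>(saturation d r (\<E> j) ((\<lambda>X. X \<inter> Q) ` \<A> j))"
    using calculation by (auto simp: Union_saturation)
  ultimately show "\<exists>j\<le>k. \<exists>X\<in>saturation d r (\<E> j) ((\<lambda>X. X \<inter> Q) ` \<A> j). x \<in> X"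
    by blast
qed

lemma (in pseudometric) control_cover_extend:
  assumes "A \<subseteq> Z" "Z \<subseteq> C"
    and cover_A: "control_cover d A r MA dd \<A>"
    and pieces_disjoint: "r_disjoint d r \<Q>" and pieces_sub: "\<And>Q. Q \<in> \<Q> \<Longrightarrow> Q \<subseteq> Z"
    and pieces_cover: "\<And>Q. Q \<in> \<Q> \<Longrightarrow> \<exists>\<E>. control_cover d Q (2 * r + MA) \<phi> dd \<E>"
    and low: "\<And>x. x \<in> Z \<Longrightarrow> \<alpha> x < 1 \<Longrightarrow> x \<in> A"
    and high: "\<And>x. x \<in> Z \<Longrightarrow> 0 < \<alpha> x \<Longrightarrow> x \<in> \<Union>\<Q>"
    and separated: "\<And>x y. x \<in> Z \<Longrightarrow> y \<in> Z \<Longrightarrow> 1 / (real dd + 1) \<le> \<bar>\<alpha> x - \<alpha> y\<bar> \<Longrightarrow> r \<le> d x y"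
    and nonneg: "0 \<le> \<phi>" "0 \<le> MA" "0 < r"
  shows "\<exists>\<W>. control_cover d Z r (\<phi> + 2 * MA + 2 * r) (Suc dd) \<W>"
proof -
  have "\<forall>Q\<in>\<Q>. \<exists>\<E>. control_cover d Q (2 * r + MA) \<phi> dd \<E>" using pieces_cover by blast
  then obtain \<E> where \<E>: "\<forall>Q\<in>\<Q>. control_cover d Q (2 * r + MA) \<phi> dd (\<E> Q)"
    by (rule bchoice[THEN exE])
  define \<B> where "\<B> j = (\<Union>Q\<in>\<Q>. saturation d r (\<E> Q j) ((\<lambda>X. X \<inter> Q) ` \<A> j))" for j
  have cover_B: "control_cover d (\<Union>\<Q>) r (\<phi> + 2 * MA + 2 * r) dd \<B>"
    unfolding \<B>_def
  proof (rule control_cover_Union[OF pieces_disjoint])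
    fix Q assume "Q \<in> \<Q>"
    then have "Q \<subseteq> C" "A \<subseteq> C" using pieces_sub assms(1,2) by blast+
    with \<E> \<open>Q \<in> \<Q>\<close> show
      "control_cover d Q r (\<phi> + 2 * MA + 2 * r) dd (\<lambda>j. saturation d r (\<E> Q j) ((\<lambda>X. X \<inter> Q) ` \<A> j))"
      using cover_A nonneg by (intro control_cover_saturate) simp_all
  qed
  have consistent: "\<Union>(\<A> j) \<inter> {x. 0 < \<alpha> x} \<subseteq> \<Union>(\<B> j)" if "j \<le> dd" for j
  proof
    fix x assume x: "x \<in> \<Union>(\<A> j) \<inter> {x. 0 < \<alpha> x}"
    then have "x \<in> Z" using control_cover_member[OF cover_A that] assms(1) by blast
    then obtain Q where "Q \<in> \<Q>" "x \<in> Q" using high x by blast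
    then have "x \<in> \<Union>(saturation d r (\<E> Q j) ((\<lambda>X. X \<inter> Q) ` \<A> j))"
      using x by (simp add: Union_saturation)
    then show "x \<in> \<Union>(\<B> j)" unfolding \<B>_def using \<open>Q \<in> \<Q>\<close> by blast
  qed
  interpret gluing d Z A "\<Union>\<Q>" r "\<phi> + 2 * MA + 2 * r" dd \<A> \<B> \<alpha>
  proof
    show "\<Union>\<Q> \<subseteq> Z" using pieces_sub by blast
    show "control_cover d A r (\<phi> + 2 * MA + 2 * r) dd \<A>"
      using nonneg by (intro control_cover_mono[OF cover_A]) simp
  qed (use assms(1) cover_B consistent low high separated in simp_all)
  show ?thesis by (intro exI[of _ glued] glued_control_cover)
qed

section \<open>A Hurewicz theorem for Lipschitz maps\<close>

definition bump :: "'x::metric_space set \<Rightarrow> real \<Rightarrow> 'x \<Rightarrow> real" where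
  "bump V s y = (if V = {} then 0 else max 0 (1 - infdist y V / s))"

lemma bump_eq_1: "y \<in> V \<Longrightarrow> bump V s y = 1"
  by (auto simp: bump_def)

lemma bump_pos_imp_near:
  assumes "0 < s" "0 < bump V s y"
  obtains v where "v \<in> V" "dist y v < s"
proof -
  have "V \<noteq> {}" "infdist y V < s"
    using assms by (auto simp: bump_def field_simps split: if_splits)
  then show thesis
    using that cINF_less_iff[of V "dist y"] by (auto simp: infdist_notempty)
qed

lemma bump_lipschitz:
  assumes "0 < s"
  shows "\<bar>bump V s y - bump V s y'\<bar> \<le> dist y y' / s"
proof (cases "V = {}")
  case False
  have "\<bar>infdist y V / s - infdist y' V / s\<bar> \<le> dist y y' / s"
    using infdist_triangle_abs[of y V y'] assms by (simp add: divide_right_mono flip: diff_divide_distrib)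
  then show ?thesis using False unfolding bump_def by (simp add: abs_le_iff max_def)
qed (use assms in \<open>simp add: bump_def\<close>)

definition thickened_preimage :: "('a \<Rightarrow> 'x::metric_space) \<Rightarrow> 'a set \<Rightarrow> real \<Rightarrow> 'x set \<Rightarrow> 'a set" where
  "thickened_preimage f Z s u = {x \<in> Z. \<exists>y\<in>u. dist (f x) y < s}"

lemma thickened_preimage_disjoint:
  assumes "r_disjoint dist (3 * s) \<U>"
    and lipschitz: "\<And>x y. x \<in> Z \<Longrightarrow> y \<in> Z \<Longrightarrow> dist (f x) (f y) \<le> L * d x y"
    and "0 < L" "L * r \<le> s"
  shows "r_disjoint d r (thickened_preimage f Z s ` \<U>)"
proof (rule r_disjointI, elim imageE)
  fix P P' x x' u u' assume "P \<noteq> P'" "x \<in> P" "x' \<in> P'"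
    and P: "P = thickened_preimage f Z s u" "u \<in> \<U>" and P': "P' = thickened_preimage f Z s u'" "u' \<in> \<U>"
  then obtain y y' where "x \<in> Z" "x' \<in> Z" "y \<in> u" "y' \<in> u'" "dist (f x) y < s" "dist (f x') y' < s" "u \<noteq> u'"
    unfolding thickened_preimage_def by blast
  moreover have "3 * s \<le> dist y y'" using r_disjointD[OF assms(1) P(2) P'(2)] calculation by blast
  ultimately have "s < dist (f x) (f x')"
    using dist_triangle[of y y' "f x"] dist_triangle[of "f x" y' "f x'"] by (simp add: dist_commute)
  then have "L * r < L * d x x'" using lipschitz[OF \<open>x \<in> Z\<close> \<open>x' \<in> Z\<close>] assms(4) by linarith
  then show "r \<le> d x x'" using \<open>0 < L\<close> by simp
qed

lemma thickened_preimage_image_bounded: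
  assumes "uniformly_bounded dist D \<U>" "u \<in> \<U>"
    and "x \<in> thickened_preimage f Z s u" "x' \<in> thickened_preimage f Z s u"
  shows "dist (f x) (f x') \<le> D + 2 * s"
proof -
  obtain y y' where "y \<in> u" "y' \<in> u" "dist (f x) y < s" "dist (f x') y' < s"
    using assms(3,4) unfolding thickened_preimage_def by blast
  moreover have "dist y y' \<le> D" using uniformly_boundedD[OF assms(1,2)] calculation by blast
  ultimately show ?thesis
    using dist_triangle[of "f x" "f x'" y] dist_triangle[of y "f x'" y'] by (simp add: dist_commute)
qed

lemma funpow_affine_nonneg:
  fixes a p x :: real
  assumes "0 \<le> a" "0 \<le> p" "0 \<le> x"
  shows "0 \<le> ((\<lambda>y. a * y + p) ^^ i) x"
  using assms by (induction i) auto

lemma funpow_affine_split: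
  fixes a p q p\<^sub>0 q\<^sub>0 r :: real
  shows "((\<lambda>y. a * y + (p * r + q)) ^^ i) (p\<^sub>0 * r + q\<^sub>0)
           = ((\<lambda>y. a * y + p) ^^ i) p\<^sub>0 * r + ((\<lambda>y. a * y + q) ^^ i) q\<^sub>0"
  by (induction i) (simp_all add: algebra_simps)

locale hurewicz_map = pseudometric C d for C :: "'a set" and d +
  fixes f :: "'a \<Rightarrow> 'x::metric_space" and L :: real and k :: nat and m b c :: real
  assumes lipschitz: "x \<in> C \<Longrightarrow> y \<in> C \<Longrightarrow> dist (f x) (f y) \<le> L * d x y"
    and L_pos: "0 < L"
    and fibre_control: "\<And>R Q. 0 < R \<Longrightarrow> Q \<subseteq> C \<Longrightarrow>
          (\<And>x y. x \<in> Q \<Longrightarrow> y \<in> Q \<Longrightarrow> dist (f x) (f y) \<le> R) \<Longrightarrow>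
          control_function Q d k (\<lambda>t. m * t + b * R + c)"
    and coeffs_nonneg: "0 \<le> m" "0 \<le> b" "0 \<le> c"
begin

lemma bump_separated:
  assumes "x \<in> C" "y \<in> C" "0 < s" "L * (real dd + 1) * r \<le> s"
    and "1 / (real dd + 1) \<le> \<bar>bump V s (f x) - bump V s (f y)\<bar>"
  shows "r \<le> d x y"
proof -
  have "1 / (real dd + 1) \<le> L * d x y / s"
    using assms(5) bump_lipschitz[OF assms(3), of V "f x" "f y"] lipschitz[OF assms(1,2)] assms(3)
    by (smt (verit) divide_right_mono)
  then have "s \<le> L * (real dd + 1) * d x y"
    using assms(3) by (simp add: field_simps)
  then show ?thesis
    using assms(4) L_pos by (smt (verit) mult_le_cancel_left_pos mult_pos_pos of_nat_0_le_iff)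
qed

end

text \<open>Stage \<open>i\<close> is the preimage of the first \<open>i + 1\<close> families of the cover \<open>U\<close> of the target; it
  receives a cover by \<open>k + i + 1\<close> families of mesh \<open>mesh i\<close>.\<close>
locale hurewicz_stages = hurewicz_map C d f L k m b c
  for C :: "'a set" and d and f :: "'a \<Rightarrow> 'x::metric_space" and L k m b c +
  fixes U :: "nat \<Rightarrow> 'x set set" and n :: nat and r D :: real
  assumes r_pos: "0 < r" and D_nonneg: "0 \<le> D"
    and cover_X: "control_cover dist UNIV (3 * (L * (real (k + n) + 1) * r)) D n U"
begin

definition scale :: real where
  "scale = L * (real (k + n) + 1) * r"

definition stage :: "nat \<Rightarrow> 'a set" where
  "stage i = {x \<in> C. \<exists>j\<le>i. f x \<in> \<Union>(U j)}"

definition pieces :: "nat \<Rightarrow> 'a set set" where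
  "pieces i = thickened_preimage f (stage i) scale ` U i"

definition mesh :: "nat \<Rightarrow> real" where
  "mesh i = ((\<lambda>M. (m + 2) * M + ((2 * m + 2) * r + b * (D + 2 * scale) + c)) ^^ i)
              (m * r + b * (D + 2 * scale) + c)"

lemma scale_pos: "0 < scale"
  unfolding scale_def using L_pos r_pos by simp

lemma mesh_nonneg: "0 \<le> mesh i"
  unfolding mesh_def
  using coeffs_nonneg r_pos D_nonneg scale_pos by (intro funpow_affine_nonneg) auto

lemma mesh_Suc: "mesh (Suc i) = m * (2 * r + mesh i) + b * (D + 2 * scale) + c + 2 * mesh i + 2 * r"
  unfolding mesh_def by (simp add: algebra_simps)

lemma pieces_sub: "Q \<in> pieces i \<Longrightarrow> Q \<subseteq> stage i"
  unfolding pieces_def thickened_preimage_def by blast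

lemma stage_sub: "stage i \<subseteq> C"
  unfolding stage_def by blast

lemma pieces_disjoint:
  assumes "i \<le> n"
  shows "r_disjoint d r (pieces i)"
  unfolding pieces_def
proof (rule thickened_preimage_disjoint[OF _ _ L_pos])
  show "r_disjoint dist (3 * scale) (U i)"
    using control_cover_disjoint[OF cover_X assms] by (simp add: scale_def)
  show "L * r \<le> scale"
    unfolding scale_def using L_pos r_pos by (simp add: mult_le_cancel_left_pos)
qed (use lipschitz stage_sub in blast)

lemma pieces_cover:
  assumes "Q \<in> pieces i" "i \<le> n" "0 < t"
  obtains \<E> where "control_cover d Q t (m * t + b * (D + 2 * scale) + c) k \<E>"
proof -
  have "control_function Q d k (\<lambda>t. m * t + b * (D + 2 * scale) + c)"
  proof (rule fibre_control)
    show "0 < D + 2 * scale" using D_nonneg scale_pos by simp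
    show "Q \<subseteq> C" using pieces_sub[OF assms(1)] stage_sub by blast
    obtain u where u: "u \<in> U i" "Q = thickened_preimage f (stage i) scale u"
      using assms(1) unfolding pieces_def by blast
    show "dist (f x) (f y) \<le> D + 2 * scale" if "x \<in> Q" "y \<in> Q" for x y
      using that unfolding u(2)
      by (rule thickened_preimage_image_bounded[OF control_cover_bounded[OF cover_X assms(2)] u(1)])
  qed
  then show thesis using that assms(3) unfolding control_function_iff by blast
qed

lemma stage_0_cover: "\<exists>\<W>. control_cover d (stage 0) r (mesh 0) k \<W>"
proof -
  have "\<forall>Q\<in>pieces 0. \<exists>\<E>. control_cover d Q r (mesh 0) k \<E>"
  proof
    fix Q assume "Q \<in> pieces 0"
    obtain \<E> where "control_cover d Q r (m * r + b * (D + 2 * scale) + c) k \<E>"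
      by (rule pieces_cover[OF \<open>Q \<in> pieces 0\<close> le0 r_pos])
    then show "\<exists>\<E>. control_cover d Q r (mesh 0) k \<E>" by (auto simp: mesh_def)
  qed
  then obtain \<E> where \<E>: "\<forall>Q\<in>pieces 0. control_cover d Q r (mesh 0) k (\<E> Q)"
    by (rule bchoice[THEN exE])
  have "stage 0 \<subseteq> \<Union>(pieces 0)"
  proof
    fix x assume "x \<in> stage 0"
    then obtain u where "u \<in> U 0" "f x \<in> u" unfolding stage_def by auto
    then have "x \<in> thickened_preimage f (stage 0) scale u"
      unfolding thickened_preimage_def using \<open>x \<in> stage 0\<close> scale_pos by (auto intro!: bexI[of _ "f x"])
    then show "x \<in> \<Union>(pieces 0)" unfolding pieces_def using \<open>u \<in> U 0\<close> by blast
  qed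
  then have "stage 0 = \<Union>(pieces 0)" using pieces_sub by blast
  moreover have "control_cover d (\<Union>(pieces 0)) r (mesh 0) k (\<lambda>j. \<Union>Q\<in>pieces 0. \<E> Q j)"
    using \<E> by (intro control_cover_Union[OF pieces_disjoint[OF le0]]) simp
  ultimately show ?thesis by auto
qed

definition level :: "nat \<Rightarrow> 'a \<Rightarrow> real" where
  "level i x = bump (\<Union>(U i)) scale (f x)"

lemma level_lt_1_imp_stage: "x \<in> stage (Suc i) \<Longrightarrow> level (Suc i) x < 1 \<Longrightarrow> x \<in> stage i"
  using bump_eq_1[of "f x" "\<Union>(U (Suc i))" scale] unfolding stage_def level_def by (auto simp: le_Suc_eq)

lemma level_pos_imp_pieces:
  assumes "x \<in> stage i" "0 < level i x"
  shows "x \<in> \<Union>(pieces i)"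
proof -
  obtain v where "v \<in> \<Union>(U i)" "dist (f x) v < scale"
    by (rule bump_pos_imp_near[OF scale_pos assms(2)[unfolded level_def]])
  then obtain u where "u \<in> U i" "v \<in> u" by blast
  then have "x \<in> thickened_preimage f (stage i) scale u"
    unfolding thickened_preimage_def using assms(1) \<open>dist (f x) v < scale\<close> by blast
  then show ?thesis unfolding pieces_def using \<open>u \<in> U i\<close> by blast
qed

lemma level_separated:
  assumes "i < n" "x \<in> stage j" "y \<in> stage j"
    and "1 / (real (k + i) + 1) \<le> \<bar>level l x - level l y\<bar>"
  shows "r \<le> d x y"
proof (rule bump_separated[OF _ _ scale_pos _ assms(4)[unfolded level_def]])
  show "x \<in> C" "y \<in> C" using assms(2,3) stage_sub by blast+
  show "L * (real (k + i) + 1) * r \<le> scale"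
    unfolding scale_def using assms(1) L_pos r_pos by (simp add: mult_right_mono)
qed

lemma stage_Suc_cover:
  assumes "i < n" and cover_i: "control_cover d (stage i) r (mesh i) (k + i) \<W>"
  shows "\<exists>\<W>'. control_cover d (stage (Suc i)) r (mesh (Suc i)) (k + Suc i) \<W>'"
proof -
  define \<phi> where "\<phi> = m * (2 * r + mesh i) + b * (D + 2 * scale) + c"
  have "0 \<le> \<phi>" unfolding \<phi>_def using coeffs_nonneg r_pos mesh_nonneg[of i] D_nonneg scale_pos
    by (intro add_nonneg_nonneg mult_nonneg_nonneg) simp_all
  have "\<exists>\<W>'. control_cover d (stage (Suc i)) r (\<phi> + 2 * mesh i + 2 * r) (Suc (k + i)) \<W>'"
  proof (rule control_cover_extend[where \<alpha> = "level (Suc i)"])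
    show "stage i \<subseteq> stage (Suc i)" "stage (Suc i) \<subseteq> C"
      unfolding stage_def by (auto intro: le_SucI)
    show "r_disjoint d r (pieces (Suc i))" using pieces_disjoint assms(1) by simp
    show "\<exists>\<E>. control_cover d Q (2 * r + mesh i) \<phi> (k + i) \<E>" if Q: "Q \<in> pieces (Suc i)" for Q
    proof -
      have "Suc i \<le> n" "0 < 2 * r + mesh i" using assms(1) r_pos mesh_nonneg[of i] by simp_all
      then obtain \<E> where "control_cover d Q (2 * r + mesh i) \<phi> k \<E>"
        unfolding \<phi>_def by (rule pieces_cover[OF Q])
      then have "control_cover d Q (2 * r + mesh i) \<phi> (k + i) (\<lambda>j. if j \<le> k then \<E> j else {})"
        by (rule control_cover_raise_dim) simp
      then show ?thesis by blast
    qed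
    show "x \<in> stage i" if "x \<in> stage (Suc i)" "level (Suc i) x < 1" for x
      using that by (rule level_lt_1_imp_stage)
    show "x \<in> \<Union>(pieces (Suc i))" if "x \<in> stage (Suc i)" "0 < level (Suc i) x" for x
      using that by (rule level_pos_imp_pieces)
    show "r \<le> d x y" if "x \<in> stage (Suc i)" "y \<in> stage (Suc i)"
      "1 / (real (k + i) + 1) \<le> \<bar>level (Suc i) x - level (Suc i) y\<bar>" for x y
      using assms(1) that by (rule level_separated)
  qed (use pieces_sub cover_i \<open>0 \<le> \<phi>\<close> mesh_nonneg r_pos in simp_all)
  then show ?thesis by (simp add: mesh_Suc \<phi>_def)
qed

lemma stage_covers: "i \<le> n \<Longrightarrow> \<exists>\<W>. control_cover d (stage i) r (mesh i) (k + i) \<W>"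
proof (induction i)
  case 0
  then show ?case using stage_0_cover by simp
next
  case (Suc i)
  then have "i < n" by simp
  with Suc.IH obtain \<W> where "control_cover d (stage i) r (mesh i) (k + i) \<W>" by auto
  then show ?case by (rule stage_Suc_cover[OF \<open>i < n\<close>])
qed

lemma domain_cover: "\<exists>\<W>. control_cover d C r (mesh n) (k + n) \<W>"
proof -
  have "stage n = C"
    unfolding stage_def using cover_X by (blast elim: control_cover_covers)
  then show ?thesis using stage_covers[of n] by simp
qed

lemma mesh_affine:
  assumes "D = cX * (3 * scale) + bX"
  defines "\<rho> \<equiv> (3 * cX + 2) * L * (real (k + n) + 1)"
  shows "mesh i = ((\<lambda>y. (m + 2) * y + (2 * m + 2 + b * \<rho>)) ^^ i) (m + b * \<rho>) * r
                 + ((\<lambda>y. (m + 2) * y + (b * bX + c)) ^^ i) (b * bX + c)"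
proof -
  have "D + 2 * scale = \<rho> * r + bX"
    unfolding assms(1) \<rho>_def scale_def by (simp add: algebra_simps)
  then have "(2 * m + 2) * r + b * (D + 2 * scale) + c = (2 * m + 2 + b * \<rho>) * r + (b * bX + c)"
    and "m * r + b * (D + 2 * scale) + c = (m + b * \<rho>) * r + (b * bX + c)"
    by (simp_all add: algebra_simps)
  then show ?thesis unfolding mesh_def by (simp only: funpow_affine_split)
qed

end

lemma asdim_AN_le_imp_le:
  assumes "asdim_AN_le Z d n"
  shows "asdim_AN Z d \<le> enat n"
proof -
  have "enat n \<in> {enat n | n. asdim_AN_le Z d n}" using assms by blast
  then show ?thesis unfolding asdim_AN_def by (rule Inf_lower)
qed

lemma asdim_AN_le_of_eq:
  assumes "asdim_AN Z d = enat n"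
  shows "asdim_AN_le Z d n"
proof -
  let ?N = "{enat n | n. asdim_AN_le Z d n}"
  have "?N \<noteq> {}"
  proof
    assume "?N = {}"
    then have "asdim_AN Z d = \<infinity>" unfolding asdim_AN_def by (simp add: top_enat_def)
    with assms show False by simp
  qed
  then obtain x where "x \<in> ?N" by blast
  then have "(LEAST x. x \<in> ?N) \<in> ?N" by (rule LeastI)
  with \<open>?N \<noteq> {}\<close> have "asdim_AN Z d \<in> ?N" unfolding asdim_AN_def Inf_enat_def by simp
  then show ?thesis using assms by auto
qed

theorem (in hurewicz_map) asdim_AN_le_domain:
  assumes "asdim_AN_le (UNIV :: 'x set) dist n"
  shows "asdim_AN_le C d (k + n)"
proof -
  obtain cX bX where cX: "0 \<le> cX" "0 \<le> bX"
    and control_X: "control_function (UNIV :: 'x set) dist n (\<lambda>r. cX * r + bX)"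
    using assms unfolding asdim_AN_le_def by blast
  define \<rho> where "\<rho> = (3 * cX + 2) * L * (real (k + n) + 1)"
  define slope where "slope = ((\<lambda>y. (m + 2) * y + (2 * m + 2 + b * \<rho>)) ^^ n) (m + b * \<rho>)"
  define intercept where "intercept = ((\<lambda>y. (m + 2) * y + (b * bX + c)) ^^ n) (b * bX + c)"
  have "0 \<le> \<rho>" unfolding \<rho>_def using cX L_pos by simp
  then have nonneg: "0 \<le> slope" "0 \<le> intercept"
    unfolding slope_def intercept_def using coeffs_nonneg cX by (simp_all add: funpow_affine_nonneg)
  have "control_function C d (k + n) (\<lambda>r. slope * r + intercept)"
    unfolding control_function_iff
  proof (intro conjI allI impI)
    fix r :: real assume "0 < r"
    then show "0 \<le> slope * r + intercept" using nonneg by simp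
    define s where "s = L * (real (k + n) + 1) * r"
    have "0 < 3 * s" unfolding s_def using L_pos \<open>0 < r\<close> by simp
    have "\<forall>r>0. \<exists>U. control_cover dist (UNIV :: 'x set) r (cX * r + bX) n U"
      using control_X unfolding control_function_iff by (elim conjE)
    then obtain U where U: "control_cover dist (UNIV :: 'x set) (3 * s) (cX * (3 * s) + bX) n U"
      using \<open>0 < 3 * s\<close> by blast
    interpret hurewicz_stages C d f L k m b c U n r "cX * (3 * s) + bX"
      using \<open>0 < r\<close> U cX \<open>0 < 3 * s\<close> unfolding s_def by unfold_locales simp_all
    have "mesh n = slope * r + intercept"
      unfolding slope_def intercept_def \<rho>_def by (rule mesh_affine) (simp add: scale_def s_def)
    then show "\<exists>U. control_cover d C r (slope * r + intercept) (k + n) U"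
      using domain_cover by simp
  qed
  then show ?thesis unfolding asdim_AN_le_def using nonneg by blast
qed

section \<open>Word metrics and isometric actions\<close>

lemma (in group) mult_inv_cancel_left: "x \<in> carrier G \<Longrightarrow> y \<in> carrier G \<Longrightarrow> x \<otimes> (inv x \<otimes> y) = y"
  by (simp flip: m_assoc)

lemma (in group) inv_mult_cancel_left: "x \<in> carrier G \<Longrightarrow> y \<in> carrier G \<Longrightarrow> inv x \<otimes> (x \<otimes> y) = y"
  by (simp flip: m_assoc)

locale word_metric = group G for G :: "('g, 'b) monoid_scheme" (structure) +
  fixes S :: "'g set"
  assumes S_sub: "S \<subseteq> carrier G"
    and S_inv: "\<And>s. s \<in> S \<Longrightarrow> inv s \<in> S"
    and S_gen: "generate G S = carrier G"
begin

abbreviation word_product :: "'g list \<Rightarrow> 'g" where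
  "word_product ws \<equiv> foldr (\<otimes>) ws \<one>"

lemma word_product_closed: "set ws \<subseteq> carrier G \<Longrightarrow> word_product ws \<in> carrier G"
  by (induction ws) auto

lemma word_product_append:
  "set xs \<subseteq> carrier G \<Longrightarrow> set ys \<subseteq> carrier G \<Longrightarrow>
   word_product (xs @ ys) = word_product xs \<otimes> word_product ys"
  by (induction xs) (auto simp: m_assoc word_product_closed)

lemma inv_word_product:
  assumes "set ws \<subseteq> carrier G"
  shows "inv (word_product ws) = word_product (rev (map (\<lambda>s. inv s) ws))"
  using assms
proof (induction ws)
  case Nil
  then show ?case by simp
next
  case (Cons a ws)
  then have a: "a \<in> carrier G" and ws: "set ws \<subseteq> carrier G" by simp_all
  have "inv (word_product (a # ws)) = inv (word_product ws) \<otimes> inv a"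
    using a ws by (simp add: inv_mult_group word_product_closed)
  also have "\<dots> = word_product (rev (map (\<lambda>s. inv s) ws)) \<otimes> word_product [inv a]"
    using Cons.IH[OF ws] a by simp
  also have "\<dots> = word_product (rev (map (\<lambda>s. inv s) ws) @ [inv a])"
    using a ws by (intro word_product_append[symmetric]) auto
  finally show ?case by simp
qed

lemma word_exists:
  assumes "g \<in> carrier G"
  obtains ws where "set ws \<subseteq> S" "word_product ws = g"
proof -
  have "g \<in> generate G S" using assms S_gen by simp
  then have "\<exists>ws. set ws \<subseteq> S \<and> word_product ws = g"
  proof (induction rule: generate.induct)
    case one
    show ?case by (intro exI[of _ "[]"]) simp
  next
    case (incl h)
    then show ?case using S_sub by (intro exI[of _ "[h]"]) auto
  next
    case (inv h)
    then show ?case using S_sub S_inv by (intro exI[of _ "[inv h]"]) auto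
  next
    case (eng h1 h2)
    then obtain ws1 ws2 where ws: "set ws1 \<subseteq> S" "word_product ws1 = h1" "set ws2 \<subseteq> S" "word_product ws2 = h2"
      by blast
    then have "set ws1 \<subseteq> carrier G" "set ws2 \<subseteq> carrier G" using S_sub by blast+
    then have "word_product (ws1 @ ws2) = h1 \<otimes> h2" using ws(2,4) by (simp only: word_product_append)
    moreover have "set (ws1 @ ws2) \<subseteq> S" using ws(1,3) by simp
    ultimately show ?case by blast
  qed
  then obtain ws where "set ws \<subseteq> S" "word_product ws = g" by blast
  then show thesis by (rule that)
qed

lemma word_length_attained:
  assumes "g \<in> carrier G"
  obtains ws where "length ws = word_length G S g" "set ws \<subseteq> S" "word_product ws = g"
proof -
  obtain ws where "set ws \<subseteq> S" "word_product ws = g" using assms by (rule word_exists)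
  then have "\<exists>vs. length vs = length ws \<and> set vs \<subseteq> S \<and> word_product vs = g" by blast
  then have "\<exists>vs. length vs = word_length G S g \<and> set vs \<subseteq> S \<and> word_product vs = g"
    unfolding word_length_def
    by (rule LeastI[where P = "\<lambda>n. \<exists>vs. length vs = n \<and> set vs \<subseteq> S \<and> word_product vs = g"])
  then obtain vs where "length vs = word_length G S g" "set vs \<subseteq> S" "word_product vs = g" by blast
  then show thesis by (rule that)
qed

lemma word_length_le:
  assumes "set ws \<subseteq> S"
  shows "word_length G S (word_product ws) \<le> length ws"
  unfolding word_length_def by (rule Least_le, rule exI[of _ ws]) (simp add: assms)

lemma word_length_one: "word_length G S \<one> = 0"
  using word_length_le[of "[]"] by simp

lemma word_length_mult:
  assumes "g \<in> carrier G" "h \<in> carrier G"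
  shows "word_length G S (g \<otimes> h) \<le> word_length G S g + word_length G S h"
proof -
  obtain ws where ws: "length ws = word_length G S g" "set ws \<subseteq> S" "word_product ws = g"
    using assms(1) by (rule word_length_attained)
  obtain vs where vs: "length vs = word_length G S h" "set vs \<subseteq> S" "word_product vs = h"
    using assms(2) by (rule word_length_attained)
  have "set ws \<subseteq> carrier G" "set vs \<subseteq> carrier G" using ws(2) vs(2) S_sub by blast+
  then have product: "word_product (ws @ vs) = g \<otimes> h" using ws(3) vs(3) by (simp only: word_product_append)
  have "set (ws @ vs) \<subseteq> S" using ws(2) vs(2) by simp
  then have "word_length G S (word_product (ws @ vs)) \<le> length (ws @ vs)" by (rule word_length_le)
  then show ?thesis by (simp only: product length_append ws(1) vs(1))
qed

lemma word_length_inv: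
  assumes "g \<in> carrier G"
  shows "word_length G S (inv g) \<le> word_length G S g"
proof -
  obtain ws where ws: "length ws = word_length G S g" "set ws \<subseteq> S" "word_product ws = g"
    using assms by (rule word_length_attained)
  have "set ws \<subseteq> carrier G" using ws(2) S_sub by blast
  then have inverse: "inv g = word_product (rev (map (\<lambda>s. inv s) ws))"
    unfolding ws(3)[symmetric] by (rule inv_word_product)
  have "set (rev (map (\<lambda>s. inv s) ws)) \<subseteq> S" using ws(2) S_inv by auto
  then have "word_length G S (word_product (rev (map (\<lambda>s. inv s) ws))) \<le> length (rev (map (\<lambda>s. inv s) ws))"
    by (rule word_length_le)
  then show ?thesis by (simp only: inverse length_rev length_map ws(1))
qed

lemma pseudometric_word_dist: "pseudometric (carrier G) (word_dist G S)"
proof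
  fix x y z assume x: "x \<in> carrier G" and y: "y \<in> carrier G"
  show "word_dist G S x x = 0" using x by (simp add: word_dist_def word_length_one)
  have "inv (inv x \<otimes> y) = inv y \<otimes> x" "inv (inv y \<otimes> x) = inv x \<otimes> y"
    using x y by (simp_all add: inv_mult_group)
  then show "word_dist G S x y = word_dist G S y x"
    using word_length_inv[of "inv x \<otimes> y"] word_length_inv[of "inv y \<otimes> x"] x y
    unfolding word_dist_def by simp
  assume z: "z \<in> carrier G"
  have "inv x \<otimes> z = (inv x \<otimes> y) \<otimes> (inv y \<otimes> z)"
    using x y z by (simp add: m_assoc mult_inv_cancel_left)
  then show "word_dist G S x z \<le> word_dist G S x y + word_dist G S y z"
    using word_length_mult[of "inv x \<otimes> y" "inv y \<otimes> z"] x y z unfolding word_dist_def by simp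
qed

lemma word_dist_mult_left:
  assumes "a \<in> carrier G" "g \<in> carrier G" "h \<in> carrier G"
  shows "word_dist G S (a \<otimes> g) (a \<otimes> h) = word_dist G S g h"
proof -
  have "inv (a \<otimes> g) \<otimes> (a \<otimes> h) = inv g \<otimes> h"
    using assms by (simp add: inv_mult_group m_assoc inv_mult_cancel_left)
  then show ?thesis unfolding word_dist_def by simp
qed

end

locale isometric_action = word_metric G S for G :: "('g, 'b) monoid_scheme" (structure) and S +
  fixes act :: "'g \<Rightarrow> 'x::metric_space \<Rightarrow> 'x"
  assumes act_one: "act \<one> x = x"
    and act_mult: "g \<in> carrier G \<Longrightarrow> h \<in> carrier G \<Longrightarrow> act (g \<otimes> h) x = act g (act h x)"
    and act_isometric: "g \<in> carrier G \<Longrightarrow> dist (act g x) (act g y) = dist x y"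
begin

lemma dist_orbit_translate:
  assumes "g \<in> carrier G" "h \<in> carrier G"
  shows "dist (act g x0) (act h x0) = dist (act (inv g \<otimes> h) x0) x0"
proof -
  have "dist (act g x0) (act h x0) = dist (act (inv g) (act g x0)) (act (inv g) (act h x0))"
    using assms by (simp add: act_isometric)
  also have "\<dots> = dist x0 (act (inv g \<otimes> h) x0)"
    using assms by (simp flip: act_mult add: act_one)
  finally show ?thesis by (simp add: dist_commute)
qed

lemma dist_orbit_word:
  assumes "set ws \<subseteq> S" and bound: "\<And>s. s \<in> S \<Longrightarrow> dist (act s x0) x0 \<le> K"
  shows "dist (act (word_product ws) x0) x0 \<le> real (length ws) * K"
  using assms(1)
proof (induction ws)
  case Nil
  then show ?case by (simp add: act_one)
next
  case (Cons s ws)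
  then have s: "s \<in> S" "s \<in> carrier G" and "word_product ws \<in> carrier G"
    using S_sub by (auto intro!: word_product_closed)
  then have "act (word_product (s # ws)) x0 = act s (act (word_product ws) x0)"
    by (simp add: act_mult)
  then have "dist (act (word_product (s # ws)) x0) x0
      \<le> dist (act s (act (word_product ws) x0)) (act s x0) + dist (act s x0) x0"
    using dist_triangle[of "act s (act (word_product ws) x0)" x0 "act s x0"] by simp
  also have "\<dots> = dist (act (word_product ws) x0) x0 + dist (act s x0) x0"
    using s by (simp add: act_isometric)
  also have "\<dots> \<le> real (length ws) * K + K"
    using Cons bound[OF s(1)] by (intro add_mono) auto
  also have "\<dots> = real (length (s # ws)) * K"
    by (simp add: algebra_simps)
  finally show ?case .
qed

lemma orbit_lipschitz:
  assumes "g \<in> carrier G" "h \<in> carrier G" and bound: "\<And>s. s \<in> S \<Longrightarrow> dist (act s x0) x0 \<le> K"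
  shows "dist (act g x0) (act h x0) \<le> K * word_dist G S g h"
proof -
  have "inv g \<otimes> h \<in> carrier G" using assms(1,2) by simp
  then obtain ws where ws: "length ws = word_length G S (inv g \<otimes> h)" "set ws \<subseteq> S"
    "word_product ws = inv g \<otimes> h"
    by (rule word_length_attained)
  have "dist (act g x0) (act h x0) = dist (act (word_product ws) x0) x0"
    using dist_orbit_translate[OF assms(1,2)] ws(3) by simp
  also have "\<dots> \<le> real (length ws) * K" by (rule dist_orbit_word[OF ws(2) bound])
  also have "\<dots> = K * word_dist G S g h" unfolding word_dist_def ws(1) by simp
  finally show ?thesis .
qed

lemma control_function_orbit_bounded:
  assumes orbit_balls: "control_function {\<gamma> \<in> carrier G. dist (act \<gamma> x0) x0 \<le> R} (word_dist G S) k D"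
    and "Q \<subseteq> carrier G"
    and orbit_bounded: "\<And>g h. g \<in> Q \<Longrightarrow> h \<in> Q \<Longrightarrow> dist (act g x0) (act h x0) \<le> R"
  shows "control_function Q (word_dist G S) k D"
proof -
  let ?W = "{\<gamma> \<in> carrier G. dist (act \<gamma> x0) x0 \<le> R}"
  obtain g0 where g0: "g0 \<in> carrier G" "Q \<subseteq> (\<otimes>) g0 ` ?W"
  proof (cases "Q = {}")
    case True
    show thesis by (rule that[of \<one>]) (simp_all add: True)
  next
    case False
    then obtain g0 where "g0 \<in> Q" by blast
    then have "g0 \<in> carrier G" using assms(2) by blast
    have "h \<in> (\<otimes>) g0 ` ?W" if "h \<in> Q" for h
    proof
      have "h \<in> carrier G" using that assms(2) by blast
      then show "h = g0 \<otimes> (inv g0 \<otimes> h)" using \<open>g0 \<in> carrier G\<close> by (simp add: mult_inv_cancel_left)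
      show "inv g0 \<otimes> h \<in> ?W"
        using orbit_bounded[OF \<open>g0 \<in> Q\<close> that] dist_orbit_translate[OF \<open>g0 \<in> carrier G\<close> \<open>h \<in> carrier G\<close>]
          \<open>g0 \<in> carrier G\<close> \<open>h \<in> carrier G\<close> by simp
    qed
    then show thesis using \<open>g0 \<in> carrier G\<close> by (intro that) blast+
  qed
  have "control_function ((\<otimes>) g0 ` ?W) (word_dist G S) k D"
    using orbit_balls by (rule control_function_image) (use g0(1) word_dist_mult_left in auto)
  then show ?thesis using g0(2) by (rule control_function_subset)
qed

end

theorem mainTheorem19:
  fixes G :: "('g, 'b) monoid_scheme" and S :: "'g set"
    and act :: "'g \<Rightarrow> 'x::metric_space \<Rightarrow> 'x" and x0 :: 'x
    and k :: nat and m b c :: real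
  assumes grp: "group G"
    and S_fin: "finite S" and S_sub: "S \<subseteq> carrier G"
    and S_sym: "\<forall>s\<in>S. inv\<^bsub>G\<^esub> s \<in> S"
    and S_gen: "generate G S = carrier G"
    and act_one: "\<forall>x. act \<one>\<^bsub>G\<^esub> x = x"
    and act_mult: "\<forall>g\<in>carrier G. \<forall>h\<in>carrier G. \<forall>x. act (g \<otimes>\<^bsub>G\<^esub> h) x = act g (act h x)"
    and act_isom: "\<forall>g\<in>carrier G. \<forall>x y. dist (act g x) (act g y) = dist x y"
    and X_fin: "asdim_AN (UNIV :: 'x set) dist < \<infinity>"
    and mbc: "m > 0" "b > 0" "c > 0"
    and ctrl: "\<forall>R>0. control_function
                 {\<gamma> \<in> carrier G. dist (act \<gamma> x0) x0 \<le> R} (word_dist G S) k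
                 (\<lambda>r. m * r + b * R + c)"
  shows "asdim_AN (carrier G) (word_dist G S) \<le> enat k + asdim_AN (UNIV :: 'x set) dist"
proof -
  interpret isometric_action G S act
    using grp S_sub S_sym S_gen act_one act_mult act_isom
    by (simp add: isometric_action_def isometric_action_axioms_def word_metric_def word_metric_axioms_def)
  define L where "L = (\<Sum>s\<in>S. dist (act s x0) x0) + 1"
  have bound: "dist (act s x0) x0 \<le> L" if "s \<in> S" for s
    unfolding L_def using member_le_sum[OF that _ S_fin, of "\<lambda>s. dist (act s x0) x0"] by simp
  interpret hurewicz_map "carrier G" "word_dist G S" "\<lambda>g. act g x0" L k m b c
  proof (intro_locales)
    show "pseudometric (carrier G) (word_dist G S)" by (rule pseudometric_word_dist)
    show "hurewicz_map_axioms (carrier G) (word_dist G S) (\<lambda>g. act g x0) L k m b c"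
      using orbit_lipschitz bound sum_nonneg[of S "\<lambda>s. dist (act s x0) x0"] ctrl mbc
      by unfold_locales (auto simp: L_def intro: control_function_orbit_bounded)
  qed
  obtain n where n: "asdim_AN (UNIV :: 'x set) dist = enat n"
    using X_fin by (cases "asdim_AN (UNIV :: 'x set) dist") auto
  then have "asdim_AN_le (carrier G) (word_dist G S) (k + n)"
    by (intro asdim_AN_le_domain asdim_AN_le_of_eq)
  then show ?thesis using n by (simp add: asdim_AN_le_imp_le)
qed

end
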